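(* Let $\mathbb{F}_q$ be a finite field, $S\subseteq\mathbb{F}_q\setminus\{0\}$ symmetric, $G=\Gamma(\mathbb{F}_q,S)$ and $\overline{G}$ its complement. Then $\overline{G}=\Gamma(\mathbb{F}_q,\overline{S})$ with $\overline{S}=(\mathbb{F}_q\setminus\{0\})\setminus S$, and \[\Theta_{\mathrm{lin}}(G)\cdot\Theta_{\mathrm{lin}}(\overline{G})\le q.\]
   Context: For a symmetric set $S\subseteq\mathbb{F}_q\setminus\{0\}$ ($S=-S$), the Cayley graph $\Gamma(\mathbb{F}_q,S)$ has vertex set $\mathbb{F}_q$, with $u\sim v$ iff $u-v\in S$. $G^k$ is the $k$-fold strong product (distinct vertices adjacent iff in each coordinate they are equal or adjacent). $\alpha_{\mathrm{lin}}(G^k)$ is the largest size of an independent set of $G^k$ that is a linear subspace of $\mathbb{F}_q^k$, and $\Theta_{\mathrm{lin}}(G)=\sup_k\alpha_{\mathrm{lin}}(G^k)^{1/k}$. *)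

theory Defs
  imports Complex_Main
begin

text \<open>Graphs on a vertex type are given by an adjacency relation.
  Vectors of \<open>F_q^k\<close> are functions \<open>nat \<Rightarrow> 'a\<close> vanishing at indices \<open>\<ge> k\<close>.\<close>

definition cayley_adj :: "'a::ab_group_add set \<Rightarrow> 'a \<Rightarrow> 'a \<Rightarrow> bool" where
  "cayley_adj S u v \<longleftrightarrow> u - v \<in> S"

definition graph_compl :: "('a \<Rightarrow> 'a \<Rightarrow> bool) \<Rightarrow> 'a \<Rightarrow> 'a \<Rightarrow> bool" where
  "graph_compl E u v \<longleftrightarrow> u \<noteq> v \<and> \<not> E u v"

definition vecs :: "nat \<Rightarrow> (nat \<Rightarrow> 'a::zero) set" where
  "vecs k = {x. \<forall>i\<ge>k. x i = 0}"

definition strong_adj :: "('a \<Rightarrow> 'a \<Rightarrow> bool) \<Rightarrow> nat \<Rightarrow> (nat \<Rightarrow> 'a) \<Rightarrow> (nat \<Rightarrow> 'a) \<Rightarrow> bool" where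
  "strong_adj E k x y \<longleftrightarrow> x \<noteq> y \<and> (\<forall>i<k. x i = y i \<or> E (x i) (y i))"

definition lin_subspace :: "nat \<Rightarrow> (nat \<Rightarrow> 'a::field) set \<Rightarrow> bool" where
  "lin_subspace k V \<longleftrightarrow> V \<subseteq> vecs k \<and> (\<lambda>i. 0) \<in> V
     \<and> (\<forall>x\<in>V. \<forall>y\<in>V. (\<lambda>i. x i + y i) \<in> V)
     \<and> (\<forall>c. \<forall>x\<in>V. (\<lambda>i. c * x i) \<in> V)"

definition indep_strong :: "('a \<Rightarrow> 'a \<Rightarrow> bool) \<Rightarrow> nat \<Rightarrow> (nat \<Rightarrow> 'a) set \<Rightarrow> bool" where
  "indep_strong E k I \<longleftrightarrow> (\<forall>x\<in>I. \<forall>y\<in>I. \<not> strong_adj E k x y)"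

definition alpha_lin :: "('a::field \<Rightarrow> 'a \<Rightarrow> bool) \<Rightarrow> nat \<Rightarrow> nat" where
  "alpha_lin E k = Max {card V | V. lin_subspace k V \<and> indep_strong E k V}"

definition theta_lin :: "('a::field \<Rightarrow> 'a \<Rightarrow> bool) \<Rightarrow> real" where
  "theta_lin E = (SUP k\<in>{1..}. real (alpha_lin E k) powr (1 / real k))"

end

theory Submission
  imports Defs "HOL-Computational_Algebra.Polynomial" "HOL-Library.FuncSet"
begin

text \<open>Let \<open>q = |F|\<close> and \<open>T = (F - {0}) - S\<close>. If a linear subspace \<open>V \<subseteq> F^k\<close> is independent
  in the \<open>k\<close>-th strong power of \<open>\<Gamma>(F, S)\<close>, no nonzero vector of \<open>V\<close> is adjacent to \<open>0\<close>, so every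
  nonzero vector of \<open>V\<close> has a coordinate in \<open>T\<close>. Hence the product of the \<open>k|T|\<close> affine
  functions \<open>1 - x_i/t\<close> (\<open>i < k\<close>, \<open>t \<in> T\<close>) is the indicator of \<open>0\<close> on \<open>V\<close> and has sum \<open>1\<close>.
  Because \<open>\<Sum>_t t^j = 0\<close> for \<open>j < q - 1\<close>, a product of \<open>d\<close> affine functions can have nonzero
  sum over a subspace of dimension \<open>n\<close> only if \<open>n(q - 1) \<le> d\<close>. So \<open>|V|^(q-1) \<le> q^(k|T|)\<close>,
  i.e. \<open>\<Theta>_lin(G) \<le> q^(|T|/(q-1))\<close>. The complement of \<open>G\<close> is the Cayley graph of \<open>T\<close>, whose
  bound has exponent \<open>|S|/(q-1)\<close>, and the two exponents add up to \<open>1\<close>.\<close>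

section \<open>Power sums over a finite field\<close>

lemma of_nat_card_UNIV_eq_0: "of_nat (card (UNIV :: 'a::{ring_1,finite} set)) = (0::'a)"
proof -
  have "(\<Sum>t\<in>(UNIV :: 'a set). t) = (\<Sum>t\<in>UNIV. t + 1)"
    by (rule sum.reindex_bij_witness[of _ "\<lambda>t. t + 1" "\<lambda>t. t - 1"]) auto
  thus ?thesis by (simp add: sum.distrib)
qed

lemma card_UNIV_field_ge_2: "card (UNIV :: 'a::{field,finite} set) \<ge> 2"
proof -
  have "card {0::'a, 1} \<le> card (UNIV :: 'a set)" by (rule card_mono) auto
  thus ?thesis by simp
qed

lemma card_roots_of_unity_le:
  assumes "j \<ge> 1"
  shows "card {x::'a::idom. x ^ j = 1} \<le> j"
proof -
  let ?p = "monom (1::'a) j - 1"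
  have "degree ?p \<le> j"
    by (metis degree_diff_le degree_monom_le degree_1 le0)
  moreover have "?p \<noteq> 0"
  proof
    assume "?p = 0"
    hence "coeff ?p j = 0" by simp
    with assms show False by (simp add: coeff_diff coeff_monom)
  qed
  ultimately have "card {x. poly ?p x = 0} \<le> j"
    using card_poly_roots_bound order_trans by blast
  moreover have "{x. poly ?p x = 0} = {x. x ^ j = 1}" by (auto simp: poly_monom)
  ultimately show ?thesis by simp
qed

lemma sum_UNIV_power_eq_0:
  assumes "j < card (UNIV :: 'a::{field,finite} set) - 1"
  shows "(\<Sum>t\<in>(UNIV :: 'a set). t ^ j) = 0"
proof (cases "j = 0")
  case True
  thus ?thesis using of_nat_card_UNIV_eq_0[where 'a='a] by simp
next
  case False
  have "card {x::'a. x ^ j = 1} \<le> j" using False by (intro card_roots_of_unity_le) simp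
  also have "j < card (UNIV - {0::'a})" using assms by (simp add: card_Diff_singleton)
  finally have "card {x::'a. x ^ j = 1} < card (UNIV - {0::'a})" .
  hence "\<not> UNIV - {0::'a} \<subseteq> {x. x ^ j = 1}"
    by (metis card_mono finite leD)
  then obtain g :: 'a where g: "g \<noteq> 0" "g ^ j \<noteq> 1" by auto
  \<comment> \<open>multiplication by \<open>g\<close> permutes the field, so the sum is invariant under the factor \<open>g ^ j \<noteq> 1\<close>\<close>
  have "(\<Sum>t\<in>(UNIV :: 'a set). t ^ j) = (\<Sum>t\<in>UNIV. (g * t) ^ j)"
    by (rule sum.reindex_bij_witness[of _ "\<lambda>t. g * t" "\<lambda>t. t / g"]) (use g in auto)
  also have "\<dots> = g ^ j * (\<Sum>t\<in>UNIV. t ^ j)"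
    by (simp add: power_mult_distrib sum_distrib_left)
  finally have "(g ^ j - 1) * (\<Sum>t\<in>(UNIV :: 'a set). t ^ j) = 0"
    by (simp add: algebra_simps)
  thus ?thesis using g by simp
qed

section \<open>Products of affine functions on a subspace\<close>

definition fun_subspace :: "('i \<Rightarrow> 'a::field) set \<Rightarrow> bool" where
  "fun_subspace V \<longleftrightarrow> (\<lambda>i. 0) \<in> V \<and> (\<forall>x\<in>V. \<forall>y\<in>V. \<forall>c. (\<lambda>i. x i + c * y i) \<in> V)"

definition affine_fun_on :: "('i \<Rightarrow> 'a::field) set \<Rightarrow> (('i \<Rightarrow> 'a) \<Rightarrow> 'a) \<Rightarrow> bool" where
  "affine_fun_on V f \<longleftrightarrow>
     (\<forall>x\<in>V. \<forall>y\<in>V. \<forall>c. f (\<lambda>i. x i + c * y i) = f x + c * (f y - f (\<lambda>i. 0)))"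

lemma fun_subspace_zero: "fun_subspace V \<Longrightarrow> (\<lambda>i. 0) \<in> V"
  by (simp add: fun_subspace_def)

lemma fun_subspace_add_scaled:
  "fun_subspace V \<Longrightarrow> x \<in> V \<Longrightarrow> y \<in> V \<Longrightarrow> (\<lambda>i. x i + c * y i) \<in> V"
  by (simp add: fun_subspace_def)

lemma fun_subspace_coordinate_hyperplane:
  "fun_subspace V \<Longrightarrow> fun_subspace {x\<in>V. x i = 0}"
  by (auto simp: fun_subspace_def)

lemma affine_fun_on_subset: "affine_fun_on V f \<Longrightarrow> W \<subseteq> V \<Longrightarrow> affine_fun_on W f"
  by (auto simp: affine_fun_on_def)

lemma bij_betw_coordinate_hyperplane_times_line:
  assumes V: "fun_subspace V" and w: "w \<in> V" "w i = 1"
  shows "bij_betw (\<lambda>(x, t). (\<lambda>j. x j + t * w j)) ({x\<in>V. x i = 0} \<times> UNIV) V"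
proof (rule bij_betw_byWitness[where f' = "\<lambda>x. ((\<lambda>j. x j + (- x i) * w j), x i)"])
  have "(\<lambda>j. x j + (- x i) * w j) \<in> V" if "x \<in> V" for x
    using fun_subspace_add_scaled[OF V that w(1)] .
  thus "(\<lambda>x. ((\<lambda>j. x j + (- x i) * w j), x i)) ` V \<subseteq> {x\<in>V. x i = 0} \<times> UNIV"
    using w(2) by auto
qed (use fun_subspace_add_scaled[OF V _ w(1)] w(2) in auto)

lemma prod_affine_along_line:
  assumes f: "\<forall>m\<in>I. affine_fun_on V (f m)" and "finite I" "x \<in> V" "w \<in> V"
  shows "(\<Prod>m\<in>I. f m (\<lambda>j. x j + t * w j))
    = (\<Sum>T\<in>Pow I. t ^ card T * (\<Prod>m\<in>T. f m w - f m (\<lambda>j. 0)) * (\<Prod>m\<in>I - T. f m x))"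
proof -
  have "(\<Prod>m\<in>I. f m (\<lambda>j. x j + t * w j)) = (\<Prod>m\<in>I. t * (f m w - f m (\<lambda>j. 0)) + f m x)"
    using f assms(3,4) unfolding affine_fun_on_def by (intro prod.cong) auto
  also have "\<dots> = (\<Sum>T\<in>Pow I. (\<Prod>m\<in>T. t * (f m w - f m (\<lambda>j. 0))) * (\<Prod>m\<in>I - T. f m x))"
    by (rule prod_add) fact
  finally show ?thesis by (simp add: prod.distrib)
qed

text \<open>Summing along the lines parallel to \<open>w\<close> kills every monomial of degree below \<open>q - 1\<close>
  in the line parameter; a surviving term leaves at least \<open>q - 1\<close> factors behind.\<close>

lemma sum_prod_affine_nonzero_descends:
  fixes V :: "('i \<Rightarrow> 'a::{field,finite}) set"
  assumes V: "fun_subspace V" "finite V" and I: "finite I"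
    and f: "\<forall>m\<in>I. affine_fun_on V (f m)"
    and w: "w \<in> V" "w i = 1"
    and nz: "(\<Sum>x\<in>V. \<Prod>m\<in>I. f m x) \<noteq> 0"
  obtains T where "T \<subseteq> I" "card T \<ge> card (UNIV :: 'a set) - 1"
    "(\<Sum>x\<in>{x\<in>V. x i = 0}. \<Prod>m\<in>I - T. f m x) \<noteq> 0"
proof -
  define V' where "V' = {x\<in>V. x i = 0}"
  define c where "c T = (\<Prod>m\<in>T. f m w - f m (\<lambda>j. 0))" for T
  define Q where "Q T x = (\<Prod>m\<in>I - T. f m x)" for T x
  have "(\<Sum>x\<in>V. \<Prod>m\<in>I. f m x) = (\<Sum>(x, t)\<in>V' \<times> UNIV. \<Prod>m\<in>I. f m (\<lambda>j. x j + t * w j))"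
    using sum.reindex_bij_betw[OF bij_betw_coordinate_hyperplane_times_line[OF V(1) w],
        of "\<lambda>x. \<Prod>m\<in>I. f m x"]
    by (simp add: V'_def case_prod_unfold)
  also have "\<dots> = (\<Sum>x\<in>V'. \<Sum>t\<in>UNIV. \<Sum>T\<in>Pow I. t ^ card T * c T * Q T x)"
    unfolding sum.cartesian_product[symmetric] c_def Q_def
    using prod_affine_along_line[OF f I _ w(1)] by (intro sum.cong refl) (auto simp: V'_def)
  also have "\<dots> = (\<Sum>T\<in>Pow I. \<Sum>x\<in>V'. \<Sum>t\<in>UNIV. t ^ card T * c T * Q T x)"
    by (subst sum.swap) (intro sum.cong refl sum.swap)
  also have "\<dots> = (\<Sum>T\<in>Pow I. c T * (\<Sum>t\<in>(UNIV :: 'a set). t ^ card T) * (\<Sum>x\<in>V'. Q T x))"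
    by (intro sum.cong refl) (simp add: sum_distrib_left sum_distrib_right algebra_simps sum.swap[of _ V'])
  finally have "(\<Sum>T\<in>Pow I. c T * (\<Sum>t\<in>(UNIV :: 'a set). t ^ card T) * (\<Sum>x\<in>V'. Q T x)) \<noteq> 0"
    using nz by simp
  then obtain T where T: "T \<in> Pow I"
    and ne: "c T * (\<Sum>t\<in>(UNIV :: 'a set). t ^ card T) * (\<Sum>x\<in>V'. Q T x) \<noteq> 0"
    by (rule sum.not_neutral_contains_not_neutral)
  have "card T \<ge> card (UNIV :: 'a set) - 1"
    using ne sum_UNIV_power_eq_0[where 'a='a, of "card T"] by (cases "card T < card (UNIV :: 'a set) - 1") auto
  with T ne show thesis by (intro that) (auto simp: V'_def Q_def)
qed

lemma card_power_le_if_sum_prod_affine_nonzero: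
  fixes V :: "('i \<Rightarrow> 'a::{field,finite}) set"
  assumes "fun_subspace V" "finite V" "finite I" "\<forall>m\<in>I. affine_fun_on V (f m)"
    and "(\<Sum>x\<in>V. \<Prod>m\<in>I. f m x) \<noteq> 0"
  shows "card V ^ (card (UNIV :: 'a set) - 1) \<le> card (UNIV :: 'a set) ^ card I"
  using assms
proof (induction "card V" arbitrary: V I rule: less_induct)
  case less
  let ?q = "card (UNIV :: 'a set)"
  have q2: "?q \<ge> 2" by (rule card_UNIV_field_ge_2)
  show ?case
  proof (cases "V \<subseteq> {\<lambda>i. 0}")
    case True
    hence "V = {\<lambda>i. 0}" using fun_subspace_zero[OF less.prems(1)] by auto
    thus ?thesis using q2 by simp
  next
    case False
    then obtain u i where u: "u \<in> V" "u i \<noteq> 0" by auto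
    define w where "w = (\<lambda>j. (1 / u i) * u j)"
    have w: "w \<in> V" "w i = 1"
      using fun_subspace_add_scaled[OF less.prems(1) fun_subspace_zero[OF less.prems(1)] u(1),
          of "1 / u i"] u(2)
      by (simp_all add: w_def)
    define V' where "V' = {x\<in>V. x i = 0}"
    have V': "fun_subspace V'" "finite V'"
      using less.prems(1,2) by (simp_all add: V'_def fun_subspace_coordinate_hyperplane)
    have cardV: "card V = card V' * ?q"
      using bij_betw_same_card[OF bij_betw_coordinate_hyperplane_times_line[OF less.prems(1) w]]
      by (simp add: V'_def card_cartesian_product)
    have "card V' > 0"
      using V' fun_subspace_zero[OF V'(1)] by (auto simp: card_gt_0_iff)
    hence smaller: "card V' < card V" using cardV q2 by simp
    obtain T where T: "T \<subseteq> I" "card T \<ge> ?q - 1" "(\<Sum>x\<in>V'. \<Prod>m\<in>I - T. f m x) \<noteq> 0"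
      using sum_prod_affine_nonzero_descends[OF less.prems(1,2,3,4) w less.prems(5)]
      unfolding V'_def by blast
    have "\<forall>m\<in>I - T. affine_fun_on V' (f m)"
      using less.prems(4) by (auto simp: V'_def intro: affine_fun_on_subset)
    hence IH: "card V' ^ (?q - 1) \<le> ?q ^ card (I - T)"
      using less.hyps[OF smaller V' _ _ T(3)] less.prems(3) by blast
    have cardIT: "card (I - T) + card T = card I"
      using T(1) less.prems(3) by (metis card_Diff_subset card_mono finite_subset le_add_diff_inverse2)
    have "card V ^ (?q - 1) = card V' ^ (?q - 1) * ?q ^ (?q - 1)"
      using cardV by (simp add: power_mult_distrib)
    also have "\<dots> \<le> ?q ^ card (I - T) * ?q ^ card T"
      using IH T(2) q2 by (intro mult_mono power_increasing) auto
    also have "\<dots> = ?q ^ card I" by (simp add: power_add[symmetric] cardIT)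
    finally show ?thesis .
  qed
qed

section \<open>Linear subspaces of \<open>F_q^k\<close>\<close>

lemma finite_vecs: "finite (vecs k :: (nat \<Rightarrow> 'a::{zero,finite}) set)"
proof -
  have "vecs k \<subseteq> (\<lambda>g j. if j < k then g j else 0) ` PiE {..<k} (\<lambda>_. (UNIV :: 'a set))"
  proof
    fix x :: "nat \<Rightarrow> 'a" assume "x \<in> vecs k"
    hence "x = (\<lambda>j. if j < k then restrict x {..<k} j else 0)"
      unfolding vecs_def by (auto simp: not_less)
    thus "x \<in> (\<lambda>g j. if j < k then g j else 0) ` PiE {..<k} (\<lambda>_. UNIV)"
      by (intro image_eqI[of _ _ "restrict x {..<k}"]) auto
  qed
  thus ?thesis by (rule finite_subset) (auto intro!: finite_imageI finite_PiE)
qed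

lemma finite_lin_subspace: "lin_subspace k V \<Longrightarrow> finite (V :: (nat \<Rightarrow> 'a::{field,finite}) set)"
  using finite_vecs[of k] unfolding lin_subspace_def by (auto intro: finite_subset)

lemma lin_subspace_imp_fun_subspace:
  assumes V: "lin_subspace k V"
  shows "fun_subspace V"
  unfolding fun_subspace_def
proof (intro conjI ballI allI)
  show "(\<lambda>i. 0) \<in> V" using V unfolding lin_subspace_def by simp
  fix x y c assume "x \<in> V" "y \<in> V"
  moreover from \<open>y \<in> V\<close> have "(\<lambda>i. c * y i) \<in> V" using V unfolding lin_subspace_def by simp
  ultimately show "(\<lambda>i. x i + c * y i) \<in> V" using V unfolding lin_subspace_def by simp
qed

lemma card_lin_subspace_with_coordinate_in:
  fixes V :: "(nat \<Rightarrow> 'a::{field,finite}) set"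
  assumes V: "lin_subspace k V" and T: "0 \<notin> T"
    and coord: "\<And>x. x \<in> V \<Longrightarrow> x \<noteq> (\<lambda>i. 0) \<Longrightarrow> \<exists>i<k. x i \<in> T"
  shows "card V ^ (card (UNIV :: 'a set) - 1) \<le> card (UNIV :: 'a set) ^ (k * card T)"
proof -
  define I where "I = {..<k} \<times> T"
  define f where "f p x = 1 - x (fst p) / snd p" for p :: "nat \<times> 'a" and x :: "nat \<Rightarrow> 'a"
  have finI: "finite I" by (simp add: I_def)
  have aff: "\<forall>m\<in>I. affine_fun_on V (f m)"
    unfolding affine_fun_on_def f_def by (auto simp: add_divide_distrib algebra_simps)
  have indicator_0: "(\<Prod>m\<in>I. f m x) = (if x = (\<lambda>i. 0) then 1 else 0)" if x: "x \<in> V" for x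
  proof (cases "x = (\<lambda>i. 0)")
    case False
    then obtain i where "i < k" "x i \<in> T" using coord x by blast
    hence "(i, x i) \<in> I" "f (i, x i) x = 0" using T by (auto simp: I_def f_def)
    hence "(\<Prod>m\<in>I. f m x) = 0" using finI by (auto simp: prod_zero_iff)
    thus ?thesis using False by simp
  qed (simp add: f_def)
  have "(\<Sum>x\<in>V. \<Prod>m\<in>I. f m x) = (\<Sum>x\<in>V. if x = (\<lambda>i. 0) then 1 else 0)"
    using indicator_0 by (rule sum.cong[OF refl])
  also have "\<dots> = 1"
    using finite_lin_subspace[OF V] fun_subspace_zero[OF lin_subspace_imp_fun_subspace[OF V]]
    by (simp add: sum.delta')
  finally have "(\<Sum>x\<in>V. \<Prod>m\<in>I. f m x) \<noteq> 0" by simp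
  from card_power_le_if_sum_prod_affine_nonzero[OF lin_subspace_imp_fun_subspace[OF V]
      finite_lin_subspace[OF V] finI aff this]
  show ?thesis by (simp add: I_def card_cartesian_product)
qed

section \<open>Independent subspaces and the linear Shannon capacity\<close>

lemma indep_lin_subspace_nonzero_coordinate:
  assumes "lin_subspace k V" "indep_strong E k V" "x \<in> V" "x \<noteq> (\<lambda>i. 0)"
  shows "\<exists>i<k. x i \<noteq> 0 \<and> \<not> E (x i) 0"
proof -
  have "\<not> strong_adj E k x (\<lambda>i. 0)"
    using assms unfolding indep_strong_def lin_subspace_def by blast
  thus ?thesis using assms(4) by (auto simp: strong_adj_def)
qed

lemma alpha_lin_attained:
  fixes E :: "'a::{field,finite} \<Rightarrow> 'a \<Rightarrow> bool"
  obtains V where "lin_subspace k V" "indep_strong E k V" "alpha_lin E k = card V"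
    and "alpha_lin E k \<ge> 1"
proof -
  let ?M = "{card V | V. lin_subspace k V \<and> indep_strong E k V}"
  have "lin_subspace k {\<lambda>i::nat. 0::'a}" "indep_strong E k {\<lambda>i::nat. 0::'a}"
    by (auto simp: lin_subspace_def vecs_def indep_strong_def strong_adj_def)
  hence one: "1 \<in> ?M" by force
  have "?M \<subseteq> card ` Pow (vecs k :: (nat \<Rightarrow> 'a) set)"
    by (auto simp: lin_subspace_def)
  hence fin: "finite ?M" by (rule finite_subset) (simp add: finite_vecs)
  have "Max ?M \<in> ?M" using fin one by (intro Max_in) auto
  moreover have "Max ?M \<ge> 1" using fin one by (rule Max_ge)
  ultimately show thesis using that unfolding alpha_lin_def by blast
qed

lemma theta_lin_le_powr:
  fixes E :: "'a::{field,finite} \<Rightarrow> 'a \<Rightarrow> bool"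
  assumes bound: "\<And>k V. lin_subspace k V \<Longrightarrow> indep_strong E k V \<Longrightarrow> card V ^ m \<le> b ^ (k * t)"
    and m: "m \<ge> 1" and b: "b > 0"
  shows "0 \<le> theta_lin E" "theta_lin E \<le> real b powr (real t / real m)"
proof -
  have each: "real (alpha_lin E k) powr (1 / real k) \<le> real b powr (real t / real m)"
    if k: "k \<ge> 1" for k
  proof -
    obtain V where "lin_subspace k V" "indep_strong E k V" "alpha_lin E k = card V"
      and pos: "alpha_lin E k \<ge> 1" by (rule alpha_lin_attained)
    hence "real (alpha_lin E k) ^ m \<le> real b ^ (k * t)"
      using bound by (metis of_nat_le_iff of_nat_power)
    moreover have "real (alpha_lin E k) powr real m = real (alpha_lin E k) ^ m"
      using pos by (intro powr_realpow) simp
    moreover have "real b powr real (k * t) = real b ^ (k * t)"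
      using b by (intro powr_realpow) simp
    ultimately have "real (alpha_lin E k) powr real m \<le> real b powr real (k * t)"
      by simp
    hence "(real (alpha_lin E k) powr real m) powr (1 / (real k * real m))
        \<le> (real b powr real (k * t)) powr (1 / (real k * real m))"
      by (intro powr_mono2) auto
    thus ?thesis using k m by (simp add: powr_powr)
  qed
  show "theta_lin E \<le> real b powr (real t / real m)"
    unfolding theta_lin_def by (rule cSUP_least) (use each in auto)
  have "bdd_above ((\<lambda>k. real (alpha_lin E k) powr (1 / real k)) ` {1..})"
    using each by (intro bdd_aboveI2) auto
  hence "real (alpha_lin E 1) powr (1 / real 1) \<le> theta_lin E"
    unfolding theta_lin_def by (rule cSUP_upper[rotated]) auto
  thus "0 \<le> theta_lin E" by (meson order_trans powr_ge_zero)
qed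

lemma theta_lin_cayley_le:
  fixes S :: "'a::{field,finite} set"
  shows "0 \<le> theta_lin (cayley_adj S)"
    "theta_lin (cayley_adj S)
      \<le> real (card (UNIV :: 'a set)) powr (real (card (UNIV - {0} - S)) / real (card (UNIV :: 'a set) - 1))"
proof -
  have bound: "card V ^ (card (UNIV :: 'a set) - 1) \<le> card (UNIV :: 'a set) ^ (k * card (UNIV - {0} - S))"
    if "lin_subspace k V" "indep_strong (cayley_adj S) k V" for k V
    using that indep_lin_subspace_nonzero_coordinate[OF that]
    by (intro card_lin_subspace_with_coordinate_in) (auto simp: cayley_adj_def)
  have m: "card (UNIV :: 'a set) - 1 \<ge> 1" and q: "card (UNIV :: 'a set) > 0"
    using card_UNIV_field_ge_2[where 'a='a] by simp_all
  show "0 \<le> theta_lin (cayley_adj S)"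
    by (rule theta_lin_le_powr[OF bound m q])
  show "theta_lin (cayley_adj S)
      \<le> real (card (UNIV :: 'a set)) powr (real (card (UNIV - {0} - S)) / real (card (UNIV :: 'a set) - 1))"
    by (rule theta_lin_le_powr[OF bound m q])
qed

lemma graph_compl_cayley_adj: "graph_compl (cayley_adj S) = cayley_adj (UNIV - {0} - S)"
  by (auto simp: fun_eq_iff graph_compl_def cayley_adj_def)

theorem mainTheorem3:
  fixes S :: "'a::{field,finite} set"
  assumes "0 \<notin> S" and "uminus ` S = S"
  shows "(\<forall>u v. graph_compl (cayley_adj S) u v \<longleftrightarrow> cayley_adj ((UNIV - {0}) - S) u v)
    \<and> theta_lin (cayley_adj S) * theta_lin (graph_compl (cayley_adj S)) \<le> real (card (UNIV :: 'a set))"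
proof (intro conjI allI)
  let ?q = "card (UNIV :: 'a set)" and ?S' = "UNIV - {0} - S"
  show "graph_compl (cayley_adj S) u v \<longleftrightarrow> cayley_adj ?S' u v" for u v
    by (simp add: graph_compl_cayley_adj)
  have S'': "UNIV - {0} - ?S' = S" using assms(1) by auto
  have "S \<subseteq> UNIV - {0}" using assms(1) by auto
  hence "card ?S' + card S = ?q - 1"
    using card_Diff_subset[of S "UNIV - {0}"] card_mono[of "UNIV - {0}" S]
    by (simp add: card_Diff_singleton)
  hence exponents: "real (card ?S') / real (?q - 1) + real (card S) / real (?q - 1) = 1"
    using card_UNIV_field_ge_2[where 'a='a] by (simp add: add_divide_distrib[symmetric])
  have "theta_lin (cayley_adj S) * theta_lin (graph_compl (cayley_adj S))
      \<le> real ?q powr (real (card ?S') / real (?q - 1)) * real ?q powr (real (card S) / real (?q - 1))"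
    unfolding graph_compl_cayley_adj
    using theta_lin_cayley_le[of S] theta_lin_cayley_le[of ?S'] S''
    by (intro mult_mono) auto
  also have "\<dots> = real ?q"
    unfolding powr_add[symmetric] exponents by simp
  finally show "theta_lin (cayley_adj S) * theta_lin (graph_compl (cayley_adj S)) \<le> real ?q" .
qed

end
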